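(* ${\bf Forb}(\Gamma_{\leq 1})=\{P_3\}$, where $P_3$ is the path on three vertices.
   Context: For a finite graph $G$ and indeterminates $X_G=\{x_u : u\in V(G)\}$, the generalized Laplacian matrix $L(G,X_G)$ is the $V(G)\times V(G)$ matrix over $\mathbb{Z}[X_G]$ with $(u,u)$-entry $x_u$ and $(u,v)$-entry $-m_{uv}$ for $u\ne v$, $m_{uv}$ being the number of edges between $u$ and $v$. The $i$-th critical ideal $I_i(G,X_G)$ is the ideal of $\mathbb{Z}[X_G]$ generated by all $i\times i$ minors of $L(G,X_G)$ (with $I_i=\langle1\rangle$ for $i<1$, $I_i=\langle 0\rangle$ for $i>|V(G)|$). The algebraic co-rank $\gamma(G)$ is the number of critical ideals of $G$ equal to $\langle 1\rangle$. $\Gamma_{\le k}$ is the set of simple connected graphs $G$ with $\gamma(G)\le k$. A graph $G$ is forbidden for $\Gamma_{\le k}$ if $\gamma(G)\ge k+1$; ${\bf Forb}(\Gamma_{\le k})$ is the set of minimal (with respect to taking induced subgraphs) simple connected forbidden graphs for $\Gamma_{\le k}$; equivalently, the simple connected graphs $G$ with $\gamma(G)=k+1$ such that $\gamma(G\setminus v)<\gamma(G)$ for every vertex $v$ of $G$. *)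

theory Defs
  imports "HOL-Library.Poly_Mapping" "Jordan_Normal_Form.Determinant"
begin

text \<open>Multivariate integer polynomials in indeterminates indexed by 'a:
  monomials are finitely supported exponent maps 'a \<Rightarrow>0 nat.\<close>
type_synonym 'a mpoly_int = "('a \<Rightarrow>\<^sub>0 nat) \<Rightarrow>\<^sub>0 int"

definition var :: "'a \<Rightarrow> 'a mpoly_int" where
  "var u = Poly_Mapping.single (Poly_Mapping.single u 1) 1"

definition simple_graph :: "'a set \<Rightarrow> ('a \<Rightarrow> 'a \<Rightarrow> bool) \<Rightarrow> bool" where
  "simple_graph V E \<longleftrightarrow> finite V \<and>
     (\<forall>u v. E u v \<longrightarrow> u \<in> V \<and> v \<in> V \<and> u \<noteq> v \<and> E v u)"

definition connected_graph :: "'a set \<Rightarrow> ('a \<Rightarrow> 'a \<Rightarrow> bool) \<Rightarrow> bool" where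
  "connected_graph V E \<longleftrightarrow> V \<noteq> {} \<and> (\<forall>u\<in>V. \<forall>v\<in>V. E\<^sup>*\<^sup>* u v)"

definition induced :: "('a \<Rightarrow> 'a \<Rightarrow> bool) \<Rightarrow> 'a set \<Rightarrow> 'a \<Rightarrow> 'a \<Rightarrow> bool" where
  "induced E W = (\<lambda>u v. E u v \<and> u \<in> W \<and> v \<in> W)"

text \<open>Generalized Laplacian L(G,X_G) (simple graph, so m_uv \<in> {0,1}).\<close>
definition gen_laplacian :: "('a \<Rightarrow> 'a \<Rightarrow> bool) \<Rightarrow> 'a \<Rightarrow> 'a \<Rightarrow> 'a mpoly_int" where
  "gen_laplacian E u v = (if u = v then var u else - (if E u v then 1 else 0))"

text \<open>All i \<times> i minors: determinants of the submatrix with rows rs and columns cs,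
  rs, cs distinct lists of i vertices (all orderings, so signs are irrelevant).\<close>
definition minors :: "'a set \<Rightarrow> ('a \<Rightarrow> 'a \<Rightarrow> bool) \<Rightarrow> nat \<Rightarrow> 'a mpoly_int set" where
  "minors V E i = {det (mat i i (\<lambda>(a, b). gen_laplacian E (rs ! a) (cs ! b))) | rs cs.
      distinct rs \<and> distinct cs \<and> length rs = i \<and> length cs = i \<and> set rs \<subseteq> V \<and> set cs \<subseteq> V}"

definition gen_ideal :: "'r::comm_ring_1 set \<Rightarrow> 'r set" where
  "gen_ideal S = {x. \<exists>F c. finite F \<and> F \<subseteq> S \<and> x = (\<Sum>s\<in>F. c s * s)}"

definition critical_ideal :: "'a set \<Rightarrow> ('a \<Rightarrow> 'a \<Rightarrow> bool) \<Rightarrow> nat \<Rightarrow> 'a mpoly_int set" where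
  "critical_ideal V E i = gen_ideal (minors V E i)"

definition alg_corank :: "'a set \<Rightarrow> ('a \<Rightarrow> 'a \<Rightarrow> bool) \<Rightarrow> nat" where
  "alg_corank V E = card {i. 1 \<le> i \<and> i \<le> card V \<and> critical_ideal V E i = UNIV}"

definition forb :: "nat \<Rightarrow> 'a set \<Rightarrow> ('a \<Rightarrow> 'a \<Rightarrow> bool) \<Rightarrow> bool" where
  "forb k V E \<longleftrightarrow> simple_graph V E \<and> connected_graph V E \<and> alg_corank V E \<ge> k + 1 \<and>
     (\<forall>W. W \<subset> V \<and> connected_graph W (induced E W) \<longrightarrow> alg_corank W (induced E W) \<le> k)"

definition P3_edge :: "nat \<Rightarrow> nat \<Rightarrow> bool" where
  "P3_edge a b \<longleftrightarrow> {a, b} = {0, 1} \<or> {a, b} = {1, 2}"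

definition graph_iso :: "'a set \<Rightarrow> ('a \<Rightarrow> 'a \<Rightarrow> bool) \<Rightarrow> 'b set \<Rightarrow> ('b \<Rightarrow> 'b \<Rightarrow> bool) \<Rightarrow> bool" where
  "graph_iso V E W F \<longleftrightarrow> (\<exists>f. bij_betw f V W \<and> (\<forall>u\<in>V. \<forall>v\<in>V. E u v \<longleftrightarrow> F (f u) (f v)))"

end

theory Submission
  imports Defs
begin

text \<open>Evaluating every indeterminate at \<open>-1\<close> is a ring homomorphism \<open>\<int>[X] \<rightarrow> \<int>\<close> that maps the
  generalized Laplacian of a complete graph to the all-\<open>(-1)\<close> matrix, which has rank one. So every
  minor of size at least two vanishes there, the corresponding critical ideals are proper, and
  \<open>\<gamma> \<le> 1\<close> for complete graphs. On the other hand \<open>P\<^sub>3\<close> has a \<open>1\<times>1\<close> minor \<open>-1\<close> and a triangular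
  \<open>2\<times>2\<close> minor \<open>1\<close>, so \<open>\<gamma>(P\<^sub>3) \<ge> 2\<close>. A connected graph that is not complete contains an induced
  \<open>P\<^sub>3\<close>; hence a minimal graph with \<open>\<gamma> \<ge> 2\<close> is \<open>P\<^sub>3\<close> itself, and conversely every proper
  connected induced subgraph of \<open>P\<^sub>3\<close> is complete.\<close>

definition monomial_eval :: "('a \<Rightarrow> 'r::comm_ring_1) \<Rightarrow> ('a \<Rightarrow>\<^sub>0 nat) \<Rightarrow> 'r" where
  "monomial_eval x m = (\<Prod>k\<in>Poly_Mapping.keys m. x k ^ Poly_Mapping.lookup m k)"

lemma monomial_eval_superset:
  "finite K \<Longrightarrow> Poly_Mapping.keys m \<subseteq> K \<Longrightarrow>
    monomial_eval x m = (\<Prod>k\<in>K. x k ^ Poly_Mapping.lookup m k)"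
  unfolding monomial_eval_def by (rule prod.mono_neutral_left) (auto simp: in_keys_iff)

lemma monomial_eval_add: "monomial_eval x (m + n) = monomial_eval x m * monomial_eval x n"
proof -
  let ?K = "Poly_Mapping.keys m \<union> Poly_Mapping.keys n"
  have "monomial_eval x (m + n) = (\<Prod>k\<in>?K. x k ^ Poly_Mapping.lookup (m + n) k)"
    by (rule monomial_eval_superset) (use keys_add[of m n] in auto)
  also have "\<dots> = monomial_eval x m * monomial_eval x n"
    by (simp add: lookup_add power_add prod.distrib monomial_eval_superset[of ?K])
  finally show ?thesis .
qed

definition mpoly_eval :: "('a \<Rightarrow> 'r::comm_ring_1) \<Rightarrow> 'a mpoly_int \<Rightarrow> 'r" where
  "mpoly_eval x p =
     (\<Sum>m\<in>Poly_Mapping.keys p. of_int (Poly_Mapping.lookup p m) * monomial_eval x m)"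

lemma mpoly_eval_superset:
  "finite K \<Longrightarrow> Poly_Mapping.keys p \<subseteq> K \<Longrightarrow>
    mpoly_eval x p = (\<Sum>m\<in>K. of_int (Poly_Mapping.lookup p m) * monomial_eval x m)"
  unfolding mpoly_eval_def by (rule sum.mono_neutral_left) (auto simp: in_keys_iff)

lemma mpoly_eval_zero: "mpoly_eval x 0 = 0"
  by (simp add: mpoly_eval_def)

lemma mpoly_eval_add: "mpoly_eval x (p + q) = mpoly_eval x p + mpoly_eval x q"
proof -
  let ?K = "Poly_Mapping.keys p \<union> Poly_Mapping.keys q"
  have "mpoly_eval x (p + q) =
      (\<Sum>m\<in>?K. of_int (Poly_Mapping.lookup (p + q) m) * monomial_eval x m)"
    by (rule mpoly_eval_superset) (use keys_add[of p q] in auto)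
  also have "\<dots> = mpoly_eval x p + mpoly_eval x q"
    by (simp add: lookup_add distrib_right sum.distrib mpoly_eval_superset[of ?K])
  finally show ?thesis .
qed

lemma mpoly_eval_diff: "mpoly_eval x (p - q) = mpoly_eval x p - mpoly_eval x q"
  using mpoly_eval_add[of x "p - q" q] by (simp add: eq_diff_eq)

lemma mpoly_eval_single: "mpoly_eval x (Poly_Mapping.single m c) = of_int c * monomial_eval x m"
  by (subst mpoly_eval_superset[of "{m}"]) auto

lemma mpoly_eval_mult: "mpoly_eval x (p * q) = mpoly_eval x p * mpoly_eval x q"
  using subset_UNIV[of "Poly_Mapping.keys p"]
proof (induction p rule: frag_induction)
  case zero show ?case by (simp add: mpoly_eval_zero)
next
  case (one m)
  show ?case
    using subset_UNIV[of "Poly_Mapping.keys q"]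
  proof (induction q rule: frag_induction)
    case zero show ?case by (simp add: mpoly_eval_zero)
  next
    case (one n)
    show ?case by (simp add: mult_single mpoly_eval_single monomial_eval_add)
  next
    case (diff a b)
    then show ?case by (simp add: right_diff_distrib mpoly_eval_diff)
  qed
next
  case (diff a b)
  then show ?case by (simp add: left_diff_distrib mpoly_eval_diff)
qed

lemma mpoly_eval_one: "mpoly_eval x 1 = 1"
  using mpoly_eval_single[of x 0 1] by (simp add: monomial_eval_def)

interpretation mpoly_eval: comm_ring_hom "mpoly_eval x" for x
  by unfold_locales (simp_all add: mpoly_eval_zero mpoly_eval_one mpoly_eval_add mpoly_eval_mult)

lemma mpoly_eval_var [simp]: "mpoly_eval x (var u) = x u"
  by (simp add: var_def mpoly_eval_single monomial_eval_def)

lemma gen_ideal_eq_UNIV_if_unit: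
  assumes "s \<in> S" and "t * s = (1::'r::comm_ring_1)"
  shows "gen_ideal S = UNIV"
proof -
  have "x \<in> gen_ideal S" for x
    unfolding gen_ideal_def
    by (intro CollectI exI[of _ "{s}"] exI[of _ "\<lambda>_. x * t"]) (use assms in \<open>auto simp: mult.assoc\<close>)
  then show ?thesis by auto
qed

lemma gen_ideal_neq_UNIV_if_hom_vanishes:
  fixes h :: "'r::comm_ring_1 \<Rightarrow> 'b::comm_ring_1"
  assumes "comm_ring_hom h" and "\<forall>s\<in>S. h s = 0"
  shows "gen_ideal S \<noteq> UNIV"
proof
  interpret h: comm_ring_hom h by fact
  assume "gen_ideal S = UNIV"
  then obtain F c where "F \<subseteq> S" and one: "1 = (\<Sum>s\<in>F. c s * s)"
    unfolding gen_ideal_def by blast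
  have "h (\<Sum>s\<in>F. c s * s) = 0"
    using \<open>F \<subseteq> S\<close> assms(2) by (auto simp: h.hom_sum h.hom_mult intro!: sum.neutral)
  with one show False by simp
qed

lemma det_const_mat_eq_0:
  assumes "2 \<le> n"
  shows "det (mat n n (\<lambda>_. c)) = (0::'r::comm_ring_1)"
  by (rule det_identical_rows[of _ n 0 1]) (use assms in auto)

definition clique :: "'a set \<Rightarrow> ('a \<Rightarrow> 'a \<Rightarrow> bool) \<Rightarrow> bool" where
  "clique V E \<longleftrightarrow> (\<forall>u\<in>V. \<forall>v\<in>V. u \<noteq> v \<longrightarrow> E u v)"

lemma minor_of_clique_eval_neg_one:
  assumes "clique V E" and "2 \<le> i" and "s \<in> minors V E i"
  shows "mpoly_eval (\<lambda>_. - 1 :: int) s = 0"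
proof -
  obtain rs cs where s: "s = det (mat i i (\<lambda>(a, b). gen_laplacian E (rs ! a) (cs ! b)))"
    and rs: "length rs = i" "set rs \<subseteq> V" and cs: "length cs = i" "set cs \<subseteq> V"
    using assms(3) unfolding minors_def by blast
  have entry: "mpoly_eval (\<lambda>_. - 1) (gen_laplacian E u v) = (- 1 :: int)"
    if "u \<in> V" "v \<in> V" for u v
    using assms(1) that
    by (simp add: clique_def gen_laplacian_def mpoly_eval.hom_uminus mpoly_eval_one)
  have "mpoly_eval.mat_hom (\<lambda>_. - 1) (mat i i (\<lambda>(a, b). gen_laplacian E (rs ! a) (cs ! b)))
      = mat i i (\<lambda>_. - 1 :: int)"
    by (rule eq_matI) (use entry nth_mem rs cs in \<open>auto simp: subset_iff\<close>)
  then show ?thesis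
    unfolding s by (metis mpoly_eval.hom_det det_const_mat_eq_0 assms(2))
qed

lemma alg_corank_clique_le_1:
  assumes "clique V E"
  shows "alg_corank V E \<le> 1"
proof -
  have "critical_ideal V E i \<noteq> UNIV" if "2 \<le> i" for i
    unfolding critical_ideal_def
    by (rule gen_ideal_neq_UNIV_if_hom_vanishes[OF mpoly_eval.comm_ring_hom_axioms])
      (use minor_of_clique_eval_neg_one[OF assms that] in blast)
  then have "{i. 1 \<le> i \<and> i \<le> card V \<and> critical_ideal V E i = UNIV} \<subseteq> {1}"
    by (metis (mono_tags, lifting) mem_Collect_eq Suc_1 le_antisym not_less_eq_eq singletonI subsetI)
  then have "alg_corank V E \<le> card {1::nat}"
    unfolding alg_corank_def by (rule card_mono[rotated]) simp
  then show ?thesis by simp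
qed

definition induced_path3 :: "('a \<Rightarrow> 'a \<Rightarrow> bool) \<Rightarrow> 'a \<Rightarrow> 'a \<Rightarrow> 'a \<Rightarrow> bool" where
  "induced_path3 E a b c \<longleftrightarrow> a \<noteq> b \<and> b \<noteq> c \<and> a \<noteq> c \<and> E a b \<and> E b c \<and> \<not> E a c"

lemma critical_ideal_eq_UNIV_if_unit_minor:
  assumes "distinct rs" "distinct cs" "length rs = i" "length cs = i" "set rs \<subseteq> V" "set cs \<subseteq> V"
    and "t * det (mat i i (\<lambda>(a, b). gen_laplacian E (rs ! a) (cs ! b))) = 1"
  shows "critical_ideal V E i = UNIV"
  unfolding critical_ideal_def
  by (rule gen_ideal_eq_UNIV_if_unit[OF _ assms(7)]) (use assms(1-6) in \<open>auto simp: minors_def\<close>)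

lemma alg_corank_path3_ge_2:
  assumes "induced_path3 F a b c"
  shows "2 \<le> alg_corank {a, b, c} F"
proof -
  note path = assms[unfolded induced_path3_def]
  let ?M1 = "mat 1 1 (\<lambda>(x, y). gen_laplacian F ([a] ! x) ([b] ! y))"
  \<comment> \<open>rows \<open>a, b\<close> and columns \<open>b, c\<close>: lower triangular because \<open>a\<close> and \<open>c\<close> are not adjacent\<close>
  let ?M2 = "mat 2 2 (\<lambda>(x, y). gen_laplacian F ([a, b] ! x) ([b, c] ! y))"
  have "det ?M1 = prod_list (diag_mat ?M1)"
    by (rule det_lower_triangular[of 1]) auto
  then have "- 1 * det ?M1 = 1"
    using path by (simp add: diag_mat_def gen_laplacian_def)
  then have I1: "critical_ideal {a, b, c} F 1 = UNIV"
    by (rule critical_ideal_eq_UNIV_if_unit_minor[rotated 6]) (use path in auto)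
  have "det ?M2 = prod_list (diag_mat ?M2)"
  proof (rule det_lower_triangular[of 2])
    fix i j :: nat assume "i < j" "j < 2"
    then have "i = 0" "j = 1" by auto
    then show "?M2 $$ (i, j) = 0" using path by (simp add: gen_laplacian_def)
  qed auto
  then have "1 * det ?M2 = 1"
    using path by (simp add: diag_mat_def gen_laplacian_def upt_conv_Cons)
  then have I2: "critical_ideal {a, b, c} F 2 = UNIV"
    by (rule critical_ideal_eq_UNIV_if_unit_minor[rotated 6]) (use path in auto)
  have "card {a, b, c} = 3" using path by simp
  then have "{1, 2} \<subseteq> {i. 1 \<le> i \<and> i \<le> card {a, b, c} \<and> critical_ideal {a, b, c} F i = UNIV}"
    using I1 I2 by auto
  then have "card {1::nat, 2} \<le> alg_corank {a, b, c} F"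
    unfolding alg_corank_def by (rule card_mono[rotated]) auto
  then show ?thesis by simp
qed

lemma induced_path3_if_connected_not_clique:
  assumes sg: "simple_graph V E" and cg: "connected_graph V E" and "\<not> clique V E"
  obtains a b c where "induced_path3 E a b c" "a \<in> V" "b \<in> V" "c \<in> V"
proof -
  obtain u v where u: "u \<in> V" and v: "v \<in> V" "u \<noteq> v" "\<not> E u v"
    using assms(3) unfolding clique_def by blast
  have "E\<^sup>*\<^sup>* u v" using cg u v unfolding connected_graph_def by blast
  \<comment> \<open>along a walk from \<open>u\<close>, the first vertex not adjacent to \<open>u\<close> ends an induced \<open>P\<^sub>3\<close>\<close>
  then have "v = u \<or> E u v \<or> (\<exists>a b c. induced_path3 E a b c \<and> a \<in> V \<and> b \<in> V \<and> c \<in> V)"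
  proof (induction rule: rtranclp_induct)
    case (step w z)
    show ?case
    proof (cases "z = u \<or> E u z")
      case False
      with step consider "w = u" | "E u w" | "\<exists>a b c. induced_path3 E a b c \<and> a \<in> V \<and> b \<in> V \<and> c \<in> V"
        by blast
      then show ?thesis
      proof cases
        case 2
        then have "induced_path3 E u w z" "w \<in> V" "z \<in> V"
          using sg False step.hyps(2) u unfolding simple_graph_def induced_path3_def by blast+
        then show ?thesis using u by blast
      qed (use False step.hyps(2) in auto)
    qed blast
  qed simp
  then show ?thesis using v that by blast
qed

lemma connected_graph_path3:
  assumes "F a b" "F b a" "F b c" "F c b"
  shows "connected_graph {a, b, c} F"
proof -
  have "F\<^sup>*\<^sup>* a b" "F\<^sup>*\<^sup>* b a" "F\<^sup>*\<^sup>* b c" "F\<^sup>*\<^sup>* c b" using assms by auto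
  moreover from this have "F\<^sup>*\<^sup>* a c" "F\<^sup>*\<^sup>* c a" by (meson rtranclp_trans)+
  ultimately show ?thesis unfolding connected_graph_def by auto
qed

lemma rtranclp_induced_from_isolated:
  assumes "\<forall>z\<in>W. \<not> E a z" and "(induced E W)\<^sup>*\<^sup>* a y"
  shows "y = a"
  using assms(2) by (induction rule: rtranclp_induct) (use assms(1) in \<open>auto simp: induced_def\<close>)

lemma clique_if_proper_connected_subgraph_of_path3:
  assumes sg: "simple_graph V E" and V: "V = {a, b, c}" and path: "induced_path3 E a b c"
    and W: "W \<subset> V" and cW: "connected_graph W (induced E W)"
  shows "clique W (induced E W)"
  unfolding clique_def
proof (intro ballI impI)
  fix u v assume uv: "u \<in> W" "v \<in> W" "u \<noteq> v"
  show "induced E W u v"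
  proof (rule ccontr)
    assume "\<not> induced E W u v"
    moreover have "E b a" "E c b" using sg path unfolding simple_graph_def induced_path3_def by blast+
    moreover have "u \<in> V" "v \<in> V" using uv W by auto
    ultimately have "{u, v} = {a, c}"
      using uv V path unfolding induced_def induced_path3_def by auto
    then have "a \<in> W" "c \<in> W" using uv by auto
    then have "W \<subseteq> {a, c}" using W V by auto
    then have "\<forall>z\<in>W. \<not> E a z" using sg path unfolding simple_graph_def induced_path3_def by auto
    moreover have "(induced E W)\<^sup>*\<^sup>* a c"
      using cW \<open>a \<in> W\<close> \<open>c \<in> W\<close> unfolding connected_graph_def by blast
    ultimately show False using path rtranclp_induced_from_isolated unfolding induced_path3_def by metis
  qed
qed

lemma forb_1_if_path3:
  assumes sg: "simple_graph V E" and V: "V = {a, b, c}" and path: "induced_path3 E a b c"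
  shows "forb 1 V E"
proof -
  have "E b a" "E c b" using sg path unfolding simple_graph_def induced_path3_def by blast+
  with path have "connected_graph V E"
    unfolding V by (auto intro!: connected_graph_path3 simp: induced_path3_def)
  moreover have "2 \<le> alg_corank V E"
    unfolding V by (rule alg_corank_path3_ge_2[OF path])
  moreover have "alg_corank W (induced E W) \<le> 1" if "W \<subset> V" "connected_graph W (induced E W)" for W
    using alg_corank_clique_le_1 clique_if_proper_connected_subgraph_of_path3[OF sg V path that] by blast
  ultimately show ?thesis using sg unfolding forb_def by auto
qed

lemma path3_if_forb_1:
  assumes "forb 1 V E"
  obtains a b c where "V = {a, b, c}" "induced_path3 E a b c"
proof -
  have sg: "simple_graph V E" and cg: "connected_graph V E" and corank: "2 \<le> alg_corank V E"
    and minimal: "\<And>W. W \<subset> V \<Longrightarrow> connected_graph W (induced E W) \<Longrightarrow> alg_corank W (induced E W) \<le> 1"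
    using assms unfolding forb_def by auto
  have "\<not> clique V E" using alg_corank_clique_le_1 corank by fastforce
  then obtain a b c where path: "induced_path3 E a b c" and abc: "{a, b, c} \<subseteq> V"
    using induced_path3_if_connected_not_clique[OF sg cg] by (metis empty_subsetI insert_subset)
  have "\<not> {a, b, c} \<subset> V"
  proof
    assume sub: "{a, b, c} \<subset> V"
    have "connected_graph {a, b, c} (induced E {a, b, c})"
      by (rule connected_graph_path3) (use sg path in \<open>auto simp: simple_graph_def induced_path3_def induced_def\<close>)
    with sub have "alg_corank {a, b, c} (induced E {a, b, c}) \<le> 1" by (rule minimal)
    moreover have "induced_path3 (induced E {a, b, c}) a b c"
      using path unfolding induced_path3_def induced_def by auto
    ultimately show False using alg_corank_path3_ge_2 by fastforce
  qed
  then show ?thesis using abc path that by blast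
qed

lemma graph_iso_P3_iff_induced_path3:
  assumes sg: "simple_graph V E"
  shows "graph_iso V E {0::nat, 1, 2} P3_edge \<longleftrightarrow> (\<exists>a b c. V = {a, b, c} \<and> induced_path3 E a b c)"
proof
  assume "graph_iso V E {0::nat, 1, 2} P3_edge"
  then obtain f where bij: "bij_betw f V {0::nat, 1, 2}"
    and edges: "\<forall>u\<in>V. \<forall>v\<in>V. E u v \<longleftrightarrow> P3_edge (f u) (f v)"
    unfolding graph_iso_def by blast
  define g where "g = inv_into V f"
  have "bij_betw g {0::nat, 1, 2} V"
    unfolding g_def by (rule bij_betw_inv_into[OF bij])
  then have V: "V = {g 0, g 1, g 2}"
    using bij_betw_imp_surj_on by fastforce
  have f_g: "f (g 0) = 0" "f (g 1) = 1" "f (g 2) = 2"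
    unfolding g_def using bij by (auto simp: bij_betw_def f_inv_into_f)
  have "g 0 \<in> V" "g 1 \<in> V" "g 2 \<in> V" using V by auto
  then have "E (g 0) (g 1)" "E (g 1) (g 2)" "\<not> E (g 0) (g 2)"
    using edges f_g by (auto simp: P3_edge_def doubleton_eq_iff)
  moreover have "g 0 \<noteq> g 1" "g 1 \<noteq> g 2" "g 0 \<noteq> g 2"
    using f_g by (metis zero_neq_one zero_neq_numeral numeral_One numeral_eq_iff semiring_norm(85))+
  ultimately have "induced_path3 E (g 0) (g 1) (g 2)"
    unfolding induced_path3_def by blast
  with V show "\<exists>a b c. V = {a, b, c} \<and> induced_path3 E a b c" by blast
next
  assume "\<exists>a b c. V = {a, b, c} \<and> induced_path3 E a b c"
  then obtain a b c where V: "V = {a, b, c}" and path: "induced_path3 E a b c" by blast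
  have abc: "a \<noteq> b" "b \<noteq> c" "a \<noteq> c" and
    edges: "E a b" "E b a" "E b c" "E c b" "\<not> E a c" "\<not> E c a" "\<not> E a a" "\<not> E b b" "\<not> E c c"
    using sg path unfolding simple_graph_def induced_path3_def by blast+
  define f where "f x = (if x = a then 0 else if x = b then 1 else (2::nat))" for x
  have "bij_betw f V {0, 1, 2}"
    using abc unfolding V bij_betw_def inj_on_def f_def by auto
  moreover have "\<forall>u\<in>V. \<forall>v\<in>V. E u v \<longleftrightarrow> P3_edge (f u) (f v)"
    using abc edges unfolding V f_def P3_edge_def by (auto simp: doubleton_eq_iff)
  ultimately show "graph_iso V E {0::nat, 1, 2} P3_edge"
    unfolding graph_iso_def by blast
qed

theorem corollary3p5:
  fixes V :: "'a set" and E :: "'a \<Rightarrow> 'a \<Rightarrow> bool"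
  shows "forb 1 V E \<longleftrightarrow> simple_graph V E \<and> graph_iso V E {0::nat, 1, 2} P3_edge"
proof
  assume forb: "forb 1 V E"
  then have sg: "simple_graph V E" unfolding forb_def by blast
  obtain a b c where "V = {a, b, c}" "induced_path3 E a b c"
    using path3_if_forb_1[OF forb] .
  then have "graph_iso V E {0::nat, 1, 2} P3_edge"
    using graph_iso_P3_iff_induced_path3[OF sg] by blast
  with sg show "simple_graph V E \<and> graph_iso V E {0::nat, 1, 2} P3_edge" ..
next
  assume "simple_graph V E \<and> graph_iso V E {0::nat, 1, 2} P3_edge"
  then have sg: "simple_graph V E" and "graph_iso V E {0::nat, 1, 2} P3_edge" by auto
  then obtain a b c where "V = {a, b, c}" "induced_path3 E a b c"
    using graph_iso_P3_iff_induced_path3[OF sg] by blast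
  then show "forb 1 V E" by (rule forb_1_if_path3[OF sg])
qed

end
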